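(* Let $(Z,Z_{ac})$ be an accretive matrix-ordered vector space and let $V=\operatorname{span}_{\mathbb{C}}Z_{sa}^1$. Then for each $n$: (i) $\operatorname{span}_{\mathbb{C}}Z_{sa}^n=M_n(V)$, and there exists a unique conjugate-linear involution $*$ on $M_n(V)$ such that $z^*=z$ for every $z\in Z_{sa}^n$; (ii) if $z=[z_{kl}]\in M_n(V)$ then $z^*=[z_{lk}^*]$ (the transpose of the entrywise adjoint, with $*$ on $V=M_1(V)$ from (i)); (iii) for $z\in M_n(V)$, $z\in Z_{ac}^n$ if and only if $\operatorname{Re}(z):=\frac12(z+z^* )\in Z_+^n$; (iv) each $Z_+^n$ is proper, i.e. $Z_+^n\cap-Z_+^n=\{0\}$.
   Context: For a complex vector space $Z$, $M_n(Z)$ is the $n\times n$ matrices over $Z$. A cone is a set $C$ with $C+C\subseteq C$, $tC\subseteq C$ ($t\ge0$); a matrix cone is a sequence of cones $C_n\subseteq M_n(Z)$ with $X^*C_nX\subseteq C_k$ for all scalar $X\in M_{n,k}$; it is $\mathbb{C}$-proper if $C_1\cap-C_1\cap iC_1\cap-iC_1=\{0\}$, and then $(Z,Z_{ac})$, $Z_{ac}=\{Z_{ac}^n\}$, is an accretive matrix-ordered vector space. Set $Z_{sa}^n=iZ_{ac}^n\cap-iZ_{ac}^n$ and $Z_+^n=Z_{sa}^n\cap Z_{ac}^n$. *)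

theory Defs
  imports Complex_Main "HOL-Library.Function_Algebras"
begin

text \<open>A complex vector space Z is modelled as a type 'z :: ab_group_add together with a
scalar multiplication scl :: complex => 'z => 'z satisfying the locale vector_space scl.
An n x n matrix over Z is a function nat => nat => 'z vanishing outside {..<n} x {..<n};
addition / zero / negation of matrices are pointwise (HOL-Library.Function_Algebras).\<close>

definition mats :: "nat \<Rightarrow> (nat \<Rightarrow> nat \<Rightarrow> 'z::zero) set" where
  "mats n = {A. \<forall>i j. \<not> (i < n \<and> j < n) \<longrightarrow> A i j = 0}"

definition matsV :: "nat \<Rightarrow> 'z::zero set \<Rightarrow> (nat \<Rightarrow> nat \<Rightarrow> 'z) set" where
  "matsV n V = {A \<in> mats n. \<forall>i<n. \<forall>j<n. A i j \<in> V}"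

definition mscale :: "(complex \<Rightarrow> 'z \<Rightarrow> 'z) \<Rightarrow> complex \<Rightarrow> (nat \<Rightarrow> nat \<Rightarrow> 'z) \<Rightarrow> (nat \<Rightarrow> nat \<Rightarrow> 'z)" where
  "mscale scl c A = (\<lambda>i j. scl c (A i j))"

text \<open>X^* A X for a scalar n x k matrix X and A in M_n(Z); the result lies in M_k(Z).\<close>
definition matcong :: "(complex \<Rightarrow> 'z \<Rightarrow> 'z) \<Rightarrow> nat \<Rightarrow> nat \<Rightarrow> (nat \<Rightarrow> nat \<Rightarrow> complex)
    \<Rightarrow> (nat \<Rightarrow> nat \<Rightarrow> 'z::comm_monoid_add) \<Rightarrow> (nat \<Rightarrow> nat \<Rightarrow> 'z)" where
  "matcong scl n k X A = (\<lambda>i j. if i < k \<and> j < k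
      then (\<Sum>p<n. \<Sum>q<n. scl (cnj (X p i) * X q j) (A p q)) else 0)"

definition is_cone :: "(complex \<Rightarrow> 'z \<Rightarrow> 'z) \<Rightarrow> (nat \<Rightarrow> nat \<Rightarrow> 'z::plus) set \<Rightarrow> bool" where
  "is_cone scl K \<longleftrightarrow> (\<forall>a\<in>K. \<forall>b\<in>K. a + b \<in> K) \<and>
     (\<forall>t::real. t \<ge> 0 \<longrightarrow> (\<forall>a\<in>K. mscale scl (complex_of_real t) a \<in> K))"

definition matrix_cone :: "(complex \<Rightarrow> 'z \<Rightarrow> 'z) \<Rightarrow> (nat \<Rightarrow> (nat \<Rightarrow> nat \<Rightarrow> 'z::comm_monoid_add) set) \<Rightarrow> bool" where
  "matrix_cone scl C \<longleftrightarrow>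
     (\<forall>n\<ge>1. C n \<subseteq> mats n \<and> is_cone scl (C n)) \<and>
     (\<forall>n\<ge>1. \<forall>k\<ge>1. \<forall>X. \<forall>A\<in>C n. matcong scl n k X A \<in> C k)"

definition C_proper :: "(complex \<Rightarrow> 'z \<Rightarrow> 'z) \<Rightarrow> (nat \<Rightarrow> (nat \<Rightarrow> nat \<Rightarrow> 'z::ab_group_add) set) \<Rightarrow> bool" where
  "C_proper scl C \<longleftrightarrow>
     C 1 \<inter> uminus ` C 1 \<inter> mscale scl \<i> ` C 1 \<inter> mscale scl (- \<i>) ` C 1 = {0}"

definition accretive_mos :: "(complex \<Rightarrow> 'z \<Rightarrow> 'z) \<Rightarrow> (nat \<Rightarrow> (nat \<Rightarrow> nat \<Rightarrow> 'z::ab_group_add) set) \<Rightarrow> bool" where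
  "accretive_mos scl C \<longleftrightarrow> vector_space scl \<and> matrix_cone scl C \<and> C_proper scl C"

definition Zsa :: "(complex \<Rightarrow> 'z \<Rightarrow> 'z) \<Rightarrow> (nat \<Rightarrow> (nat \<Rightarrow> nat \<Rightarrow> 'z) set) \<Rightarrow> nat \<Rightarrow> (nat \<Rightarrow> nat \<Rightarrow> 'z) set" where
  "Zsa scl C n = mscale scl \<i> ` C n \<inter> mscale scl (- \<i>) ` C n"

definition Zplus :: "(complex \<Rightarrow> 'z \<Rightarrow> 'z) \<Rightarrow> (nat \<Rightarrow> (nat \<Rightarrow> nat \<Rightarrow> 'z) set) \<Rightarrow> nat \<Rightarrow> (nat \<Rightarrow> nat \<Rightarrow> 'z) set" where
  "Zplus scl C n = Zsa scl C n \<inter> C n"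

text \<open>V = complex span of Z_sa^1 (identifying M_1(Z) with Z via the (0,0) entry).\<close>
definition Vspace :: "(complex \<Rightarrow> 'z::ab_group_add \<Rightarrow> 'z) \<Rightarrow> (nat \<Rightarrow> (nat \<Rightarrow> nat \<Rightarrow> 'z) set) \<Rightarrow> 'z set" where
  "Vspace scl C = module.span scl {A 0 0 | A. A \<in> Zsa scl C 1}"

definition entry1 :: "'z \<Rightarrow> (nat \<Rightarrow> nat \<Rightarrow> 'z::zero)" where
  "entry1 v = (\<lambda>i j. if i = 0 \<and> j = 0 then v else 0)"

definition is_conj_inv :: "(complex \<Rightarrow> 'z \<Rightarrow> 'z) \<Rightarrow> nat \<Rightarrow> 'z::ab_group_add set
    \<Rightarrow> ((nat \<Rightarrow> nat \<Rightarrow> 'z) \<Rightarrow> (nat \<Rightarrow> nat \<Rightarrow> 'z)) \<Rightarrow> bool" where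
  "is_conj_inv scl n V f \<longleftrightarrow>
     (\<forall>z\<in>matsV n V. f z \<in> matsV n V) \<and>
     (\<forall>z\<in>matsV n V. \<forall>w\<in>matsV n V. f (z + w) = f z + f w) \<and>
     (\<forall>c. \<forall>z\<in>matsV n V. f (mscale scl c z) = mscale scl (cnj c) (f z)) \<and>
     (\<forall>z\<in>matsV n V. f (f z) = z)"

end

theory Submission imports Defs begin

text \<open>Write V_sa for the entries of Z_sa^1. Compressing A \<in> M_n(Z) by a column vector x gives
the 1 x 1 matrix x^* A x, and the polarisation identity recovers every entry A_kl from such
compressions. Hence if A, -A, iA and -iA all lie in Z_ac^n, C-properness of Z_ac^1 forces A = 0;
in particular V_sa \<inter> i V_sa = 0, Z_sa^n \<inter> i Z_sa^n = 0 and Z_+^n is proper. So V_sa is a real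
form of V, with conjugation (a + ib)^* = a - ib. For z \<in> Z_sa^n polarisation writes
z_kl = a + ib and z_lk = a - ib with a, b \<in> V_sa, so the transposed entrywise adjoint fixes
Z_sa^n; conversely the matrix units over V_sa are combinations of compressions x a x^* of
a \<in> Z_sa^1, so Z_sa^n spans M_n(V). Every z \<in> M_n(V) is therefore h + ik with h, k \<in> Z_sa^n;
a conjugate-linear map fixing Z_sa^n must send it to h - ik, which gives uniqueness, and since
ik and -ik lie in Z_ac^n, z \<in> Z_ac^n iff h = Re z \<in> Z_+^n.\<close>

lemma sum_apply: "(sum f A) x = (\<Sum>a\<in>A. f a x)"
  by (induct A rule: infinite_finite_induct) auto

lemma (in vector_space) mem_scale_image_iff:
  "c \<noteq> 0 \<Longrightarrow> x \<in> scale c ` K \<longleftrightarrow> scale (inverse c) x \<in> K"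
  by (auto intro: image_eqI[of x _ "scale (inverse c) x"])

section \<open>Real forms of complex vector spaces\<close>

locale real_form = vector_space scale for scale :: "complex \<Rightarrow> 'a::ab_group_add \<Rightarrow> 'a" +
  fixes R :: "'a set"
  assumes zero_mem: "0 \<in> R"
    and add_mem: "a \<in> R \<Longrightarrow> b \<in> R \<Longrightarrow> a + b \<in> R"
    and real_scale_mem: "a \<in> R \<Longrightarrow> scale (of_real t) a \<in> R"
    and eq_i_scale_zero: "a \<in> R \<Longrightarrow> b \<in> R \<Longrightarrow> a = scale \<i> b \<Longrightarrow> a = 0"
begin

lemma neg_mem: "a \<in> R \<Longrightarrow> - a \<in> R"
  using real_scale_mem[of a "-1"] by simp

lemma diff_mem: "a \<in> R \<Longrightarrow> b \<in> R \<Longrightarrow> a - b \<in> R"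
  using add_mem neg_mem by (metis diff_conv_add_uminus)

lemma span_decomp:
  assumes "v \<in> span R"
  obtains a b where "a \<in> R" "b \<in> R" "v = a + scale \<i> b"
proof -
  from assms have "\<exists>a\<in>R. \<exists>b\<in>R. v = a + scale \<i> b"
  proof (induct rule: span_induct_alt)
    case base
    show ?case using zero_mem by force
  next
    case (step c x y)
    then obtain a b where ab: "a \<in> R" "b \<in> R" "y = a + scale \<i> b" by blast
    have "c = of_real (Re c) + \<i> * of_real (Im c)" by (simp add: complex_eq_iff)
    then have "scale c x = scale (of_real (Re c)) x + scale \<i> (scale (of_real (Im c)) x)"
      by (metis scale_left_distrib scale_scale)
    then have "scale c x + y
        = (scale (of_real (Re c)) x + a) + scale \<i> (scale (of_real (Im c)) x + b)"
      using ab by (simp add: scale_right_distrib algebra_simps)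
    then show ?case using step ab by (metis add_mem real_scale_mem)
  qed
  then show thesis using that by blast
qed

lemma decomp_unique:
  assumes "a \<in> R" "b \<in> R" "a' \<in> R" "b' \<in> R" and eq: "a + scale \<i> b = a' + scale \<i> b'"
  shows "a = a'" "b = b'"
proof -
  have "a - a' = scale \<i> (b' - b)"
    using eq by (simp add: scale_right_diff_distrib algebra_simps)
  then have "a - a' = 0"
    using assms by (metis diff_mem eq_i_scale_zero)
  then show "a = a'" by simp
  with eq have "scale \<i> b = scale \<i> b'" by simp
  then show "b = b'" by simp
qed

definition conj :: "'a \<Rightarrow> 'a" where
  "conj v = (SOME w. \<exists>a\<in>R. \<exists>b\<in>R. v = a + scale \<i> b \<and> w = a - scale \<i> b)"

lemma conj_eq: assumes "a \<in> R" "b \<in> R" shows "conj (a + scale \<i> b) = a - scale \<i> b"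
  unfolding conj_def
proof (rule some_equality)
  show "\<exists>a'\<in>R. \<exists>b'\<in>R. a + scale \<i> b = a' + scale \<i> b' \<and> a - scale \<i> b = a' - scale \<i> b'"
    using assms by blast
  show "w = a - scale \<i> b"
    if "\<exists>a'\<in>R. \<exists>b'\<in>R. a + scale \<i> b = a' + scale \<i> b' \<and> w = a' - scale \<i> b'" for w
    using that decomp_unique[OF assms] by metis
qed

lemma conj_eq': "a \<in> R \<Longrightarrow> b \<in> R \<Longrightarrow> conj (a - scale \<i> b) = a + scale \<i> b"
  using conj_eq[of a "- b"] neg_mem by simp

lemma conj_in_span: "v \<in> span R \<Longrightarrow> conj v \<in> span R"
  by (elim span_decomp) (simp add: conj_eq span_diff span_scale span_base)

lemma conj_conj: "v \<in> span R \<Longrightarrow> conj (conj v) = v"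
  by (elim span_decomp) (simp add: conj_eq conj_eq')

lemma conj_add:
  assumes "v \<in> span R" "w \<in> span R" shows "conj (v + w) = conj v + conj w"
proof -
  obtain a b a' b' where ab: "a \<in> R" "b \<in> R" "v = a + scale \<i> b"
    and ab': "a' \<in> R" "b' \<in> R" "w = a' + scale \<i> b'"
    using assms by (metis span_decomp)
  have "v + w = (a + a') + scale \<i> (b + b')"
    using ab ab' by (simp add: scale_right_distrib algebra_simps)
  then have "conj (v + w) = (a + a') - scale \<i> (b + b')"
    using ab ab' by (metis add_mem conj_eq)
  then show ?thesis
    using ab ab' by (simp add: conj_eq scale_right_distrib algebra_simps)
qed

lemma conj_scale:
  assumes "v \<in> span R" shows "conj (scale c v) = scale (cnj c) (conj v)"
proof -
  obtain a b where ab: "a \<in> R" "b \<in> R" "v = a + scale \<i> b"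
    using assms by (metis span_decomp)
  define x y where "x = Re c" and "y = Im c"
  have c: "c = of_real x + \<i> * of_real y" and "cnj c = of_real x - \<i> * of_real y"
    by (simp_all add: x_def y_def complex_eq_iff)
  have "scale c v = (scale (of_real x) a - scale (of_real y) b)
      + scale \<i> (scale (of_real y) a + scale (of_real x) b)"
    unfolding ab(3) c by (simp add: scale_left_distrib scale_right_distrib algebra_simps)
  then have "conj (scale c v) = (scale (of_real x) a - scale (of_real y) b)
      - scale \<i> (scale (of_real y) a + scale (of_real x) b)"
    using ab by (simp add: conj_eq add_mem diff_mem real_scale_mem)
  also have "\<dots> = scale (cnj c) (conj v)"
    unfolding ab(3) conj_eq[OF ab(1,2)] \<open>cnj c = _\<close>
    by (simp add: scale_left_diff_distrib scale_right_diff_distrib scale_right_distrib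
        scale_left_distrib algebra_simps)
  finally show ?thesis .
qed

end

section \<open>Compressions of matrices to 1 x 1 matrices\<close>

lemma mem_uminus_image_iff: "x \<in> uminus ` K \<longleftrightarrow> - x \<in> (K :: 'a::group_add set)"
  by (metis image_eqI image_iff minus_minus)

lemma sum_sum_delta:
  assumes "a < (n::nat)" "b < n"
  shows "(\<Sum>p<n. \<Sum>q<n. if p = a \<and> q = b then f p q else 0) = f a b"
proof -
  have "(\<Sum>q<n. if p = a \<and> q = b then f p q else 0) = (if p = a then f a b else 0)" for p
    using assms(2) by (simp cong: if_cong)
  then show ?thesis using assms(1) by simp
qed

definition quad_form :: "(complex \<Rightarrow> 'z \<Rightarrow> 'z) \<Rightarrow> nat \<Rightarrow> (nat \<Rightarrow> nat \<Rightarrow> 'z::comm_monoid_add)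
    \<Rightarrow> (nat \<Rightarrow> complex) \<Rightarrow> 'z" where
  "quad_form scl n A x = (\<Sum>p<n. \<Sum>q<n. scl (cnj (x p) * x q) (A p q))"

definition e_plus :: "nat \<Rightarrow> nat \<Rightarrow> complex \<Rightarrow> nat \<Rightarrow> complex" where
  "e_plus k l c = (\<lambda>p. (if p = k then 1 else 0) + c * (if p = l then 1 else 0))"

lemma matcong_column: "matcong scl n 1 (\<lambda>p _. x p) A = entry1 (quad_form scl n A x)"
  by (simp add: matcong_def entry1_def quad_form_def fun_eq_iff)

lemma entry1_inject: "entry1 a = entry1 b \<longleftrightarrow> a = b"
  by (auto simp: entry1_def fun_eq_iff)

lemma entry1_0: "entry1 0 = (0 :: nat \<Rightarrow> nat \<Rightarrow> 'a::zero)"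
  by (simp add: entry1_def fun_eq_iff)

lemma entry1_add: "entry1 (a + b) = entry1 a + entry1 (b :: 'a::monoid_add)"
  by (simp add: entry1_def fun_eq_iff)

lemma entry1_uminus: "entry1 (- a) = - entry1 (a :: 'a::group_add)"
  by (simp add: entry1_def fun_eq_iff)

lemma mats_1_eq_entry1: "A \<in> mats 1 \<Longrightarrow> A = entry1 (A 0 0)"
  by (auto simp: mats_def entry1_def fun_eq_iff)

lemma vector_space_mscale: "vector_space scl \<Longrightarrow> vector_space (mscale scl)"
  unfolding vector_space_def by (simp add: mscale_def fun_eq_iff)

locale accretive_matrix_ordered = vector_space scl for scl :: "complex \<Rightarrow> 'z::ab_group_add \<Rightarrow> 'z" +
  fixes C :: "nat \<Rightarrow> (nat \<Rightarrow> nat \<Rightarrow> 'z) set"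
  assumes cone: "matrix_cone scl C" and proper: "C_proper scl C"
begin

sublocale M: vector_space "mscale scl"
  by (rule vector_space_mscale) unfold_locales

lemma mscale_entry1: "mscale scl c (entry1 v) = entry1 (scl c v)"
  by (simp add: mscale_def entry1_def fun_eq_iff)

lemma quad_form_mscale: "quad_form scl n (mscale scl c A) x = scl c (quad_form scl n A x)"
  by (simp add: quad_form_def mscale_def scale_sum_right mult.commute)

lemma quad_form_uminus: "quad_form scl n (- A) x = - quad_form scl n A x"
  by (simp add: quad_form_def sum_negf)

lemma quad_form_e_plus:
  assumes "k < n" "l < n"
  shows "quad_form scl n A (e_plus k l c)
    = A k k + scl c (A k l) + scl (cnj c) (A l k) + scl (c * cnj c) (A l l)"
proof -
  have e: "cnj (e_plus k l c p) * e_plus k l c q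
      = (if p = k \<and> q = k then 1 else 0) + (if p = k \<and> q = l then c else 0)
        + (if p = l \<and> q = k then cnj c else 0) + (if p = l \<and> q = l then c * cnj c else 0)" for p q
    by (auto simp: e_plus_def algebra_simps)
  have scl_if: "scl (if P then c' else 0) v = (if P then scl c' v else 0)" for P c' v
    by simp
  show ?thesis
    unfolding quad_form_def e scale_left_distrib sum.distrib scl_if
    using assms by (simp only: sum_sum_delta scale_one)
qed

lemma quad_form_e: "k < n \<Longrightarrow> l < n \<Longrightarrow> quad_form scl n A (e_plus k l 0) = A k k"
  by (simp add: quad_form_e_plus)

lemma quad_form_polarisation:
  fixes A :: "nat \<Rightarrow> nat \<Rightarrow> 'z"
  assumes "k < n" "l < n"
  defines "P \<equiv> quad_form scl n A (e_plus k l 1) - A k k - A l l"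
    and "Q \<equiv> quad_form scl n A (e_plus k l \<i>) - A k k - A l l"
  shows "A k l = scl (1/2) P + scl \<i> (scl (-1/2) Q)"
    and "A l k = scl (1/2) P - scl \<i> (scl (-1/2) Q)"
proof -
  have P: "P = A k l + A l k" and Q: "Q = scl \<i> (A k l) - scl \<i> (A l k)"
    using assms by (simp_all add: quad_form_e_plus)
  have half: "scl (1/2) v + scl (1/2) v = v" for v
    by (simp flip: scale_left_distrib)
  show "A k l = scl (1/2) P + scl \<i> (scl (-1/2) Q)"
    unfolding P Q by (simp add: scale_right_distrib scale_right_diff_distrib algebra_simps half)
  show "A l k = scl (1/2) P - scl \<i> (scl (-1/2) Q)"
    unfolding P Q by (simp add: scale_right_distrib scale_right_diff_distrib algebra_simps half)
qed

lemma C_subset_mats: "n \<ge> 1 \<Longrightarrow> C n \<subseteq> mats n"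
  and C_add: "n \<ge> 1 \<Longrightarrow> a \<in> C n \<Longrightarrow> b \<in> C n \<Longrightarrow> a + b \<in> C n"
  and C_real_scale: "n \<ge> 1 \<Longrightarrow> t \<ge> 0 \<Longrightarrow> a \<in> C n \<Longrightarrow> mscale scl (of_real t) a \<in> C n"
  and C_matcong: "n \<ge> 1 \<Longrightarrow> k \<ge> 1 \<Longrightarrow> A \<in> C n \<Longrightarrow> matcong scl n k X A \<in> C k"
  using cone unfolding matrix_cone_def is_cone_def by blast+

lemma C_zero: assumes "n \<ge> 1" shows "0 \<in> C n"
proof -
  have "0 \<in> C 1" using proper unfolding C_proper_def by blast
  then have "matcong scl 1 n X 0 \<in> C n" for X using C_matcong assms by blast
  moreover have "matcong scl 1 n X 0 = 0" for X by (simp add: matcong_def fun_eq_iff)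
  ultimately show ?thesis by metis
qed

lemma quad_form_in_C: "n \<ge> 1 \<Longrightarrow> A \<in> C n \<Longrightarrow> entry1 (quad_form scl n A x) \<in> C 1"
  unfolding matcong_column[symmetric] by (rule C_matcong) auto

lemma mem_mscale_i_image_iff:
  "z \<in> mscale scl \<i> ` K \<longleftrightarrow> mscale scl (-\<i>) z \<in> K"
  "z \<in> mscale scl (-\<i>) ` K \<longleftrightarrow> mscale scl \<i> z \<in> K"
  using M.mem_scale_image_iff[of \<i> z K] M.mem_scale_image_iff[of "-\<i>" z K] by simp_all

lemma C_pointed:
  assumes n: "n \<ge> 1" and A: "A \<in> C n" "- A \<in> C n" "mscale scl \<i> A \<in> C n" "mscale scl (-\<i>) A \<in> C n"
  shows "A = 0"
proof -
  have quad_form_0: "quad_form scl n A x = 0" for x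
  proof -
    let ?q = "entry1 (quad_form scl n A x)"
    have "- ?q = entry1 (quad_form scl n (- A) x)"
      "mscale scl c ?q = entry1 (quad_form scl n (mscale scl c A) x)" for c
      by (simp_all add: entry1_uminus quad_form_uminus mscale_entry1 quad_form_mscale)
    then have "?q \<in> C 1" "- ?q \<in> C 1" "mscale scl (-\<i>) ?q \<in> C 1" "mscale scl \<i> ?q \<in> C 1"
      using A quad_form_in_C[OF n] by metis+
    then have "?q \<in> C 1 \<inter> uminus ` C 1 \<inter> mscale scl \<i> ` C 1 \<inter> mscale scl (-\<i>) ` C 1"
      by (simp only: mem_mscale_i_image_iff mem_uminus_image_iff Int_iff)
    then have "?q = 0" using proper unfolding C_proper_def by blast
    then show ?thesis by (metis entry1_0 entry1_inject)
  qed
  have "A k l = 0" if "k < n" "l < n" for k l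
    using quad_form_polarisation[OF that, of A] quad_form_e[OF that, of A] quad_form_e[OF that(2,1), of A]
    by (simp add: quad_form_0)
  moreover have "A \<in> mats n" using A C_subset_mats n by blast
  ultimately show ?thesis by (auto simp: mats_def fun_eq_iff)
qed

lemma Zsa_iff: "z \<in> Zsa scl C n \<longleftrightarrow> mscale scl \<i> z \<in> C n \<and> mscale scl (-\<i>) z \<in> C n"
  unfolding Zsa_def Int_iff mem_mscale_i_image_iff by blast

lemma Zsa_subset_mats: assumes "n \<ge> 1" "z \<in> Zsa scl C n" shows "z \<in> mats n"
proof -
  have "mscale scl \<i> z \<in> mats n" using assms Zsa_iff C_subset_mats by blast
  then show ?thesis by (simp add: mats_def mscale_def)
qed

lemma matcong_mscale: "matcong scl n k X (mscale scl c A) = mscale scl c (matcong scl n k X A)"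
  by (simp add: matcong_def mscale_def fun_eq_iff scale_sum_right mult.commute)

lemma Zsa_matcong: "n \<ge> 1 \<Longrightarrow> k \<ge> 1 \<Longrightarrow> A \<in> Zsa scl C n \<Longrightarrow> matcong scl n k X A \<in> Zsa scl C k"
  unfolding Zsa_iff matcong_mscale[symmetric] using C_matcong by blast

lemma real_form_Zsa: assumes n: "n \<ge> 1" shows "real_form (mscale scl) (Zsa scl C n)"
proof (intro real_form.intro real_form_axioms.intro M.vector_space_axioms)
  show "0 \<in> Zsa scl C n" using C_zero[OF n] by (simp add: Zsa_iff)
next
  fix a b assume "a \<in> Zsa scl C n" "b \<in> Zsa scl C n"
  then show "a + b \<in> Zsa scl C n" by (metis C_add[OF n] M.scale_right_distrib Zsa_iff)
next
  fix a and t :: real assume a: "a \<in> Zsa scl C n"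
  show "mscale scl (of_real t) a \<in> Zsa scl C n"
  proof (cases "t \<ge> 0")
    case True
    have "mscale scl c (mscale scl (of_real t) a) = mscale scl (of_real t) (mscale scl c a)" for c
      by (simp add: M.scale_scale mult.commute)
    then show ?thesis using a C_real_scale[OF n True] unfolding Zsa_iff by metis
  next
    case False
    then have "- t \<ge> 0" by simp
    have "mscale scl c (mscale scl (of_real t) a) = mscale scl (of_real (- t)) (mscale scl (- c) a)" for c
      by (simp add: M.scale_scale)
    then show ?thesis using a C_real_scale[OF n \<open>- t \<ge> 0\<close>] unfolding Zsa_iff
      by (metis minus_minus)
  qed
next
  fix a b assume a: "a \<in> Zsa scl C n" and b: "b \<in> Zsa scl C n" and ab: "a = mscale scl \<i> b"
  have "- a = mscale scl (-\<i>) b" using ab by (simp add: M.scale_minus_left)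
  then show "a = 0" using a b ab C_pointed[OF n] by (simp add: Zsa_iff)
qed

lemma Zplus_pointed: assumes n: "n \<ge> 1" shows "Zplus scl C n \<inter> uminus ` Zplus scl C n = {0}"
proof -
  have "0 \<in> Zplus scl C n"
    using real_form.zero_mem[OF real_form_Zsa[OF n]] C_zero[OF n] by (simp add: Zplus_def)
  moreover have "z = 0" if "z \<in> Zplus scl C n" "- z \<in> Zplus scl C n" for z
    using that C_pointed[OF n] by (simp add: Zplus_def Zsa_iff)
  ultimately show ?thesis by (auto intro: image_eqI[of 0 uminus 0])
qed

section \<open>The involution on M_n(V)\<close>

definition Vsa :: "'z set" where
  "Vsa = {A 0 0 | A. A \<in> Zsa scl C 1}"

lemma Vsa_iff: "v \<in> Vsa \<longleftrightarrow> entry1 v \<in> Zsa scl C 1"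
proof
  assume "v \<in> Vsa"
  then obtain A where A: "A \<in> Zsa scl C 1" and v: "v = A 0 0" unfolding Vsa_def by blast
  have "A = entry1 (A 0 0)" using Zsa_subset_mats[OF _ A] by (intro mats_1_eq_entry1) simp
  then show "entry1 v \<in> Zsa scl C 1" using A v by metis
next
  assume "entry1 v \<in> Zsa scl C 1"
  then show "v \<in> Vsa"
    unfolding Vsa_def by (intro CollectI exI[of _ "entry1 v"]) (simp add: entry1_def)
qed

lemma real_form_Vsa: "real_form scl Vsa"
proof -
  interpret Z: real_form "mscale scl" "Zsa scl C 1" by (rule real_form_Zsa) simp
  show ?thesis
  proof (intro real_form.intro real_form_axioms.intro vector_space_axioms)
    show "0 \<in> Vsa" using Z.zero_mem by (simp add: Vsa_iff entry1_0)
    show "a + b \<in> Vsa" if "a \<in> Vsa" "b \<in> Vsa" for a b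
      using that Z.add_mem by (simp add: Vsa_iff entry1_add)
    show "scl (of_real t) a \<in> Vsa" if "a \<in> Vsa" for a t
      using that Z.real_scale_mem by (simp add: Vsa_iff flip: mscale_entry1)
    show "a = 0" if "a \<in> Vsa" "b \<in> Vsa" "a = scl \<i> b" for a b
    proof -
      have "entry1 a = 0"
        using that Z.eq_i_scale_zero[of "entry1 a" "entry1 b"] by (simp add: Vsa_iff mscale_entry1)
      then show "a = 0" by (metis entry1_0 entry1_inject)
    qed
  qed
qed

sublocale V: real_form scl Vsa
  by (rule real_form_Vsa)

lemma quad_form_Zsa_in_Vsa: "n \<ge> 1 \<Longrightarrow> z \<in> Zsa scl C n \<Longrightarrow> quad_form scl n z x \<in> Vsa"
  unfolding Vsa_iff matcong_column[symmetric] by (rule Zsa_matcong) auto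

lemma Zsa_entry:
  assumes n: "n \<ge> 1" and z: "z \<in> Zsa scl C n" and kl: "k < n" "l < n"
  shows "z k l \<in> span Vsa" and "V.conj (z l k) = z k l"
proof -
  define a b where "a = scl (1/2) (quad_form scl n z (e_plus k l 1) - z k k - z l l)"
    and "b = scl (-1/2) (quad_form scl n z (e_plus k l \<i>) - z k k - z l l)"
  have diag: "z k k \<in> Vsa" "z l l \<in> Vsa"
    using quad_form_Zsa_in_Vsa[OF n z] quad_form_e kl by metis+
  have "scl (of_real t) (quad_form scl n z (e_plus k l c) - z k k - z l l) \<in> Vsa" for t c
    using diag quad_form_Zsa_in_Vsa[OF n z] by (intro V.real_scale_mem V.diff_mem)
  from this[of "1/2"] this[of "-1/2"] have ab: "a \<in> Vsa" "b \<in> Vsa"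
    unfolding a_def b_def by simp_all
  have "z k l = a + scl \<i> b" "z l k = a - scl \<i> b"
    unfolding a_def b_def by (fact quad_form_polarisation[OF kl])+
  then show "z k l \<in> span Vsa" "V.conj (z l k) = z k l"
    using ab by (simp_all add: span_add span_scale span_base V.conj_eq')
qed

definition star :: "nat \<Rightarrow> (nat \<Rightarrow> nat \<Rightarrow> 'z) \<Rightarrow> nat \<Rightarrow> nat \<Rightarrow> 'z" where
  "star n z = (\<lambda>k l. if k < n \<and> l < n then V.conj (z l k) else 0)"

lemma star_Zsa: assumes "n \<ge> 1" "z \<in> Zsa scl C n" shows "star n z = z"
  using Zsa_entry[OF assms] Zsa_subset_mats[OF assms] by (auto simp: star_def mats_def fun_eq_iff)

lemma Zsa_subset_matsV: "n \<ge> 1 \<Longrightarrow> Zsa scl C n \<subseteq> matsV n (span Vsa)"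
  using Zsa_subset_mats Zsa_entry by (auto simp: matsV_def)

lemma star_conj_inv: "is_conj_inv scl n (span Vsa) (star n)"
  unfolding is_conj_inv_def matsV_def mats_def star_def
  by (auto simp: fun_eq_iff mscale_def V.conj_in_span V.conj_conj V.conj_add V.conj_scale)

definition scalar_mat :: "nat \<Rightarrow> (nat \<Rightarrow> nat \<Rightarrow> complex) \<Rightarrow> 'z \<Rightarrow> nat \<Rightarrow> nat \<Rightarrow> 'z" where
  "scalar_mat n f v = (\<lambda>i j. if i < n \<and> j < n then scl (f i j) v else 0)"

lemma scalar_mat_add: "scalar_mat n f v + scalar_mat n g v = scalar_mat n (\<lambda>i j. f i j + g i j) v"
  and scalar_mat_diff: "scalar_mat n f v - scalar_mat n g v = scalar_mat n (\<lambda>i j. f i j - g i j) v"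
  and mscale_scalar_mat: "mscale scl c (scalar_mat n f v) = scalar_mat n (\<lambda>i j. c * f i j) v"
  by (simp_all add: scalar_mat_def mscale_def fun_eq_iff scale_left_distrib scale_left_diff_distrib)

lemma rank_one_Zsa:
  assumes "n \<ge> 1" "v \<in> Vsa" shows "scalar_mat n (\<lambda>i j. cnj (x i) * x j) v \<in> Zsa scl C n"
proof -
  have "matcong scl 1 n (\<lambda>_ j. x j) (entry1 v) = scalar_mat n (\<lambda>i j. cnj (x i) * x j) v"
    by (simp add: scalar_mat_def matcong_def entry1_def fun_eq_iff)
  moreover have "entry1 v \<in> Zsa scl C 1" using assms(2) by (simp add: Vsa_iff)
  ultimately show ?thesis using Zsa_matcong[OF _ assms(1)] by (metis order_refl)
qed

definition unit_mat :: "nat \<Rightarrow> nat \<Rightarrow> 'z \<Rightarrow> nat \<Rightarrow> nat \<Rightarrow> 'z" where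
  "unit_mat k l v = (\<lambda>i j. if i = k \<and> j = l then v else 0)"

lemma unit_mat_in_span_Zsa:
  assumes n: "n \<ge> 1" and kl: "k < n" "l < n" and v: "v \<in> span Vsa"
  shows "unit_mat k l v \<in> M.span (Zsa scl C n)"
proof -
  have real_case: "unit_mat k l a \<in> M.span (Zsa scl C n)" if a: "a \<in> Vsa" for a
  proof -
    let ?r = "\<lambda>x. scalar_mat n (\<lambda>i j. cnj (x i) * x j) a"
    let ?d = "\<lambda>c i j. cnj (e_plus k l c i) * e_plus k l c j - cnj (e_plus k l 0 i) * e_plus k l 0 j
        - cnj (e_plus l k 0 i) * e_plus l k 0 j"
    have coef: "(if i = k \<and> j = l then 1 else 0) = 1/2 * ?d 1 i j + \<i> * (-1/2 * ?d \<i> i j)" for i j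
      by (auto simp: e_plus_def field_simps)
    have "unit_mat k l a = scalar_mat n (\<lambda>i j. if i = k \<and> j = l then 1 else 0) a"
      using kl by (auto simp: unit_mat_def scalar_mat_def fun_eq_iff)
    also have "\<dots> = scalar_mat n (\<lambda>i j. 1/2 * ?d 1 i j + \<i> * (-1/2 * ?d \<i> i j)) a"
      by (simp only: coef)
    also have "\<dots> = mscale scl (1/2) (?r (e_plus k l 1) - ?r (e_plus k l 0) - ?r (e_plus l k 0))
        + mscale scl \<i> (mscale scl (-1/2) (?r (e_plus k l \<i>) - ?r (e_plus k l 0) - ?r (e_plus l k 0)))"
      by (simp only: scalar_mat_add scalar_mat_diff mscale_scalar_mat)
    also have "\<dots> \<in> M.span (Zsa scl C n)"
      by (intro M.span_add M.span_scale M.span_diff M.span_base rank_one_Zsa n a)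
    finally show ?thesis .
  qed
  obtain a b where "a \<in> Vsa" "b \<in> Vsa" "v = a + scl \<i> b"
    using v by (rule V.span_decomp)
  moreover have "unit_mat k l (a + scl \<i> b) = unit_mat k l a + mscale scl \<i> (unit_mat k l b)"
    by (simp add: unit_mat_def mscale_def fun_eq_iff)
  ultimately show ?thesis using real_case by (metis M.span_add M.span_scale)
qed

lemma mats_eq_sum_unit_mat:
  assumes "z \<in> mats n" shows "z = (\<Sum>k<n. \<Sum>l<n. unit_mat k l (z k l))"
proof (intro ext)
  fix i j
  show "z i j = (\<Sum>k<n. \<Sum>l<n. unit_mat k l (z k l)) i j"
  proof (cases "i < n \<and> j < n")
    case True
    then show ?thesis using sum_sum_delta[of i n j "\<lambda>_ _. z i j"]
      by (simp add: sum_apply unit_mat_def eq_commute[of i] eq_commute[of j] cong: if_cong)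
  next
    case False
    then show ?thesis using assms
      by (auto simp: sum_apply unit_mat_def mats_def intro!: sum.neutral)
  qed
qed

lemma span_Zsa_eq: assumes n: "n \<ge> 1" shows "M.span (Zsa scl C n) = matsV n (span Vsa)"
proof
  have "M.subspace (matsV n (span Vsa))"
    unfolding M.subspace_def matsV_def mats_def
    by (auto simp: mscale_def intro: span_add span_scale span_zero)
  then show "M.span (Zsa scl C n) \<subseteq> matsV n (span Vsa)"
    using Zsa_subset_matsV[OF n] by (rule M.span_minimal[rotated])
  show "matsV n (span Vsa) \<subseteq> M.span (Zsa scl C n)"
  proof
    fix z assume z: "z \<in> matsV n (span Vsa)"
    have "(\<Sum>k<n. \<Sum>l<n. unit_mat k l (z k l)) \<in> M.span (Zsa scl C n)"
      using z unfolding matsV_def by (intro M.span_sum unit_mat_in_span_Zsa n) auto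
    moreover have "z \<in> mats n" using z by (simp add: matsV_def)
    ultimately show "z \<in> M.span (Zsa scl C n)" using mats_eq_sum_unit_mat by metis
  qed
qed

lemma matsV_decomp:
  assumes n: "n \<ge> 1" and z: "z \<in> matsV n (span Vsa)"
  obtains h k where "h \<in> Zsa scl C n" "k \<in> Zsa scl C n" "z = h + mscale scl \<i> k"
  using real_form.span_decomp[OF real_form_Zsa[OF n]] z span_Zsa_eq[OF n] by blast

lemma conj_inv_fixing_Zsa:
  assumes n: "n \<ge> 1" and g: "is_conj_inv scl n (span Vsa) g" "\<forall>z\<in>Zsa scl C n. g z = z"
    and h: "h \<in> Zsa scl C n" and k: "k \<in> Zsa scl C n"
  shows "g (h + mscale scl \<i> k) = h - mscale scl \<i> k"
proof -
  have "h \<in> matsV n (span Vsa)" "k \<in> matsV n (span Vsa)"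
    using Zsa_subset_matsV[OF n] h k by auto
  moreover have "mscale scl \<i> k \<in> matsV n (span Vsa)"
    using \<open>k \<in> matsV n _\<close> by (auto simp: matsV_def mats_def mscale_def intro: span_scale)
  ultimately have "g (h + mscale scl \<i> k) = g h + mscale scl (cnj \<i>) (g k)"
    using g(1) unfolding is_conj_inv_def by simp
  then show ?thesis using g(2) h k by (simp add: M.scale_minus_left)
qed

lemma star_decomp:
  "n \<ge> 1 \<Longrightarrow> h \<in> Zsa scl C n \<Longrightarrow> k \<in> Zsa scl C n \<Longrightarrow> star n (h + mscale scl \<i> k) = h - mscale scl \<i> k"
  using star_conj_inv star_Zsa by (intro conj_inv_fixing_Zsa) auto

lemma accretive_iff_Re_positive:
  assumes n: "n \<ge> 1" and z: "z \<in> matsV n (span Vsa)"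
  shows "z \<in> C n \<longleftrightarrow> mscale scl (1/2) (z + star n z) \<in> Zplus scl C n"
proof -
  obtain h k where h: "h \<in> Zsa scl C n" and k: "k \<in> Zsa scl C n" and z_eq: "z = h + mscale scl \<i> k"
    using matsV_decomp[OF n z] .
  have "z + star n z = h + h"
    unfolding z_eq star_decomp[OF n h k] by simp
  then have Re: "mscale scl (1/2) (z + star n z) = h"
    by (simp add: M.scale_right_distrib flip: M.scale_left_distrib)
  have "mscale scl \<i> k \<in> C n" "- mscale scl \<i> k \<in> C n"
    using k by (simp_all add: Zsa_iff)
  then have "z \<in> C n \<longleftrightarrow> h \<in> C n"
    unfolding z_eq by (metis C_add[OF n] add_diff_cancel diff_conv_add_uminus)
  then show ?thesis using h unfolding Re Zplus_def by blast
qed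

lemma star_unique:
  assumes n: "n \<ge> 1" and g: "is_conj_inv scl n (span Vsa) g" "\<forall>z\<in>Zsa scl C n. g z = z"
    and z: "z \<in> matsV n (span Vsa)"
  shows "g z = star n z"
proof -
  obtain h k where h: "h \<in> Zsa scl C n" and k: "k \<in> Zsa scl C n" and z_eq: "z = h + mscale scl \<i> k"
    using matsV_decomp[OF n z] .
  show ?thesis
    unfolding z_eq conj_inv_fixing_Zsa[OF n g h k] star_decomp[OF n h k] ..
qed

end

theorem lemma2p6:
  fixes scl :: "complex \<Rightarrow> 'z::ab_group_add \<Rightarrow> 'z"
    and C :: "nat \<Rightarrow> (nat \<Rightarrow> nat \<Rightarrow> 'z) set"
  assumes "accretive_mos scl C"
  shows "\<exists>star :: nat \<Rightarrow> (nat \<Rightarrow> nat \<Rightarrow> 'z) \<Rightarrow> (nat \<Rightarrow> nat \<Rightarrow> 'z). \<forall>n\<ge>1.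
     module.span (mscale scl) (Zsa scl C n) = matsV n (Vspace scl C) \<and>
     is_conj_inv scl n (Vspace scl C) (star n) \<and>
     (\<forall>z\<in>Zsa scl C n. star n z = z) \<and>
     (\<forall>g. is_conj_inv scl n (Vspace scl C) g \<and> (\<forall>z\<in>Zsa scl C n. g z = z)
          \<longrightarrow> (\<forall>z\<in>matsV n (Vspace scl C). g z = star n z)) \<and>
     (\<forall>z\<in>matsV n (Vspace scl C).
          star n z = (\<lambda>k l. if k < n \<and> l < n then star 1 (entry1 (z l k)) 0 0 else 0)) \<and>
     (\<forall>z\<in>matsV n (Vspace scl C).
          z \<in> C n \<longleftrightarrow> mscale scl (1/2) (z + star n z) \<in> Zplus scl C n) \<and>
     Zplus scl C n \<inter> uminus ` Zplus scl C n = {0}"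
proof -
  interpret accretive_matrix_ordered scl C
    using assms unfolding accretive_mos_def
    by (intro accretive_matrix_ordered.intro accretive_matrix_ordered_axioms.intro) auto
  have V: "Vspace scl C = span Vsa"
    by (simp add: Vspace_def Vsa_def)
  have star_1: "star 1 (entry1 w) 0 0 = V.conj w" for w
    by (simp add: star_def entry1_def)
  show ?thesis
    unfolding V
  proof (intro exI[of _ star] allI impI conjI ballI)
    fix n :: nat assume n: "n \<ge> 1"
    show "M.span (Zsa scl C n) = matsV n (span Vsa)" by (rule span_Zsa_eq[OF n])
    show "is_conj_inv scl n (span Vsa) (star n)" by (rule star_conj_inv)
    show "star n z = z" if "z \<in> Zsa scl C n" for z by (rule star_Zsa[OF n that])
    show "g z = star n z" if "is_conj_inv scl n (span Vsa) g \<and> (\<forall>z\<in>Zsa scl C n. g z = z)"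
      and "z \<in> matsV n (span Vsa)" for g z
      using star_unique[OF n] that by blast
    show "star n z = (\<lambda>k l. if k < n \<and> l < n then star 1 (entry1 (z l k)) 0 0 else 0)" for z
      unfolding star_1 unfolding star_def ..
    show "z \<in> C n \<longleftrightarrow> mscale scl (1/2) (z + star n z) \<in> Zplus scl C n"
      if "z \<in> matsV n (span Vsa)" for z
      by (rule accretive_iff_Re_positive[OF n that])
    show "Zplus scl C n \<inter> uminus ` Zplus scl C n = {0}" by (rule Zplus_pointed[OF n])
  qed
qed

end
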